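(* Let $f\colon\mathbb{R}^n\to\mathbb{R}$ be convex and differentiable with $\|\nabla f(x)-\nabla f(y)\|\le L\|x-y\|$ (Euclidean norm, $L>0$), with a minimizer $x_\star$, $f_\star=f(x_\star)$. Given $x_0$, let $y_0=x_0$ and for $k=0,1,\dots$ \[ y_{k+1}=x_k-\tfrac1L\nabla f(x_k),\qquad x_{k+1}=y_{k+1}+\frac{k}{k+3}(y_{k+1}-y_k)+\frac{k+2}{k+3}(y_{k+1}-x_k). \] Then for $k=1,2,\dots$, $f(y_k)-f_\star\le\dfrac{L\|x_0-x_\star\|^2}{(k+1)^2}$.
   Context: This iteration is called Simple-OGM. *)

theory Defs
  imports "HOL-Analysis.Analysis"
begin

fun ogm_iter :: "('a::real_inner \<Rightarrow> 'a) \<Rightarrow> real \<Rightarrow> 'a \<Rightarrow> nat \<Rightarrow> 'a \<times> 'a" where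
  "ogm_iter g L x0 0 = (x0, x0)"
| "ogm_iter g L x0 (Suc k) =
     (let (xk, yk) = ogm_iter g L x0 k;
          yk1 = xk - (1 / L) *\<^sub>R g xk
      in (yk1 + (real k / (real k + 3)) *\<^sub>R (yk1 - yk)
             + ((real k + 2) / (real k + 3)) *\<^sub>R (yk1 - xk), yk1))"

definition ogm_x :: "('a::real_inner \<Rightarrow> 'a) \<Rightarrow> real \<Rightarrow> 'a \<Rightarrow> nat \<Rightarrow> 'a" where
  "ogm_x g L x0 k = fst (ogm_iter g L x0 k)"

definition ogm_y :: "('a::real_inner \<Rightarrow> 'a) \<Rightarrow> real \<Rightarrow> 'a \<Rightarrow> nat \<Rightarrow> 'a" where
  "ogm_y g L x0 k = snd (ogm_iter g L x0 k)"

end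

theory Submission
  imports Defs
begin

text \<open>With \<open>\<theta>\<^sub>k = (k + 2) / 2\<close> and \<open>z\<^sub>k = \<theta>\<^sub>k x\<^sub>k - (\<theta>\<^sub>k - 1) y\<^sub>k\<close>, the scheme is a
  gradient step \<open>z\<^sub>k\<^sub>+\<^sub>1 = z\<^sub>k - (2 \<theta>\<^sub>k / L) \<nabla>f(x\<^sub>k)\<close> on the auxiliary sequence, and the potential
  \<open>U\<^sub>k = 2 \<theta>\<^sub>k\<^sup>2 (f(x\<^sub>k) - f\<^sub>\<star> - |\<nabla>f(x\<^sub>k)|\<^sup>2 / 2L) + L/2 |z\<^sub>k\<^sub>+\<^sub>1 - x\<^sub>\<star>|\<^sup>2\<close> is nonincreasing:
  \<open>U\<^sub>k\<^sub>+\<^sub>1 \<le> U\<^sub>k\<close> is a nonnegative combination of three instances of the interpolation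
  inequality \<open>f(u) \<ge> f(v) + \<nabla>f(v)\<cdot>(u - v) + |\<nabla>f(u) - \<nabla>f(v)|\<^sup>2 / 2L\<close> of smooth convex
  functions, and the same combination with \<open>\<theta>\<^sub>-\<^sub>1 = 0\<close> gives \<open>U\<^sub>0 \<le> L/2 |x\<^sub>0 - x\<^sub>\<star>|\<^sup>2\<close>.
  Since \<open>y\<^sub>k\<^sub>+\<^sub>1\<close> is a gradient step from \<open>x\<^sub>k\<close>, \<open>2 \<theta>\<^sub>k\<^sup>2 (f(y\<^sub>k\<^sub>+\<^sub>1) - f\<^sub>\<star>) \<le> U\<^sub>k\<close>.\<close>

lemma has_real_derivative_along_line:
  fixes f :: "'a::real_inner \<Rightarrow> real"
  assumes "\<And>x. (f has_derivative (\<lambda>h. g x \<bullet> h)) (at x)"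
  shows "((\<lambda>t. f (x + t *\<^sub>R d)) has_real_derivative (g (x + t *\<^sub>R d) \<bullet> d)) (at t)"
proof -
  have "((\<lambda>t. x + t *\<^sub>R d) has_derivative (\<lambda>s. s *\<^sub>R d)) (at t)"
    by (auto intro!: derivative_eq_intros)
  from has_derivative_compose[OF this assms]
  show ?thesis
    by (rule has_derivative_imp_has_field_derivative) simp
qed

lemma convex_on_imp_above_tangent_plane:
  fixes f :: "'a::real_inner \<Rightarrow> real"
  assumes convex: "convex_on UNIV f"
    and gradient: "\<And>x. (f has_derivative (\<lambda>h. g x \<bullet> h)) (at x)"
  shows "f y \<ge> f x + g x \<bullet> (y - x)"
proof -
  define \<phi> where "\<phi> t = f (x + t *\<^sub>R (y - x))" for t
  have "convex_on UNIV \<phi>"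
  proof (rule convex_onI)
    fix t a b :: real
    assume "0 < t" "t < 1"
    have "x + ((1 - t) *\<^sub>R a + t *\<^sub>R b) *\<^sub>R (y - x)
        = (1 - t) *\<^sub>R (x + a *\<^sub>R (y - x)) + t *\<^sub>R (x + b *\<^sub>R (y - x))"
      by (simp add: algebra_simps)
    with \<open>0 < t\<close> \<open>t < 1\<close> convex_onD[OF convex, of t]
    show "\<phi> ((1 - t) *\<^sub>R a + t *\<^sub>R b) \<le> (1 - t) * \<phi> a + t * \<phi> b"
      unfolding \<phi>_def by simp
  qed simp
  moreover have "(\<phi> has_real_derivative (g x \<bullet> (y - x))) (at 0)"
    using has_real_derivative_along_line[OF gradient, of x "y - x" 0] unfolding \<phi>_def by simp
  ultimately have "\<phi> 1 - \<phi> 0 \<ge> (g x \<bullet> (y - x)) * (1 - 0)"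
    by (intro convex_on_imp_above_tangent[where A=UNIV]) auto
  then show ?thesis
    unfolding \<phi>_def by simp
qed

lemma lipschitz_gradient_imp_quadratic_upper_bound:
  fixes f :: "'a::real_inner \<Rightarrow> real"
  assumes gradient: "\<And>x. (f has_derivative (\<lambda>h. g x \<bullet> h)) (at x)"
    and lipschitz: "\<And>x y. norm (g x - g y) \<le> L * norm (x - y)"
  shows "f y \<le> f x + g x \<bullet> (y - x) + L / 2 * (norm (y - x))\<^sup>2"
proof -
  define \<psi> where
    "\<psi> t = f (x + t *\<^sub>R (y - x)) - t * (g x \<bullet> (y - x)) - L / 2 * t\<^sup>2 * (norm (y - x))\<^sup>2" for t
  have "\<psi> 1 \<le> \<psi> 0"
  proof (rule DERIV_nonpos_imp_nonincreasing[of 0 1 \<psi>])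
    fix t :: real
    assume "0 \<le> t" "t \<le> 1"
    define \<psi>' where
      "\<psi>' = (g (x + t *\<^sub>R (y - x)) - g x) \<bullet> (y - x) - L * t * (norm (y - x))\<^sup>2"
    have "(\<psi> has_real_derivative \<psi>') (at t)"
      unfolding \<psi>_def \<psi>'_def
      by (auto intro!: derivative_eq_intros has_real_derivative_along_line[OF gradient]
          simp: inner_diff_left)
    moreover have "\<psi>' \<le> 0"
    proof -
      have "(g (x + t *\<^sub>R (y - x)) - g x) \<bullet> (y - x)
          \<le> norm (g (x + t *\<^sub>R (y - x)) - g x) * norm (y - x)"
        by (rule norm_cauchy_schwarz)
      also have "\<dots> \<le> L * norm (t *\<^sub>R (y - x)) * norm (y - x)"
        using lipschitz[of "x + t *\<^sub>R (y - x)" x] by (simp add: mult_right_mono)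
      also have "\<dots> = L * t * (norm (y - x))\<^sup>2"
        using \<open>0 \<le> t\<close> by (simp add: power2_eq_square)
      finally show ?thesis
        unfolding \<psi>'_def by simp
    qed
    ultimately show "\<exists>d. (\<psi> has_real_derivative d) (at t) \<and> d \<le> 0"
      by blast
  qed simp
  then show ?thesis
    unfolding \<psi>_def by simp
qed

lemma gradient_eq_0_if_minimum:
  fixes f :: "'a::real_inner \<Rightarrow> real"
  assumes "(f has_derivative (\<lambda>h. g \<bullet> h)) (at x)"
    and "\<And>y. f x \<le> f y"
  shows "g = 0"
proof -
  have "(\<lambda>h. g \<bullet> h) = (\<lambda>h. 0)"
    using assms by (intro has_derivative_local_min) auto
  then have "g \<bullet> g = 0"
    by metis
  then show ?thesis
    by simp
qed

lemma norm_diff_scaleR_squared: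
  fixes a b :: "'a::real_inner"
  shows "(norm (a - c *\<^sub>R b))\<^sup>2 = (norm a)\<^sup>2 - 2 * c * (a \<bullet> b) + c\<^sup>2 * (norm b)\<^sup>2"
  unfolding power2_norm_eq_inner
  by (simp add: inner_commute power2_eq_square algebra_simps)

locale smooth_convex =
  fixes f :: "'a::real_inner \<Rightarrow> real" and g :: "'a \<Rightarrow> 'a" and L :: real
  assumes convex: "convex_on UNIV f"
    and gradient: "\<And>x. (f has_derivative (\<lambda>h. g x \<bullet> h)) (at x)"
    and L_pos: "L > 0"
    and lipschitz_gradient: "\<And>x y. norm (g x - g y) \<le> L * norm (x - y)"
begin

lemma above_tangent_plane: "f y \<ge> f x + g x \<bullet> (y - x)"
  using convex_on_imp_above_tangent_plane[OF convex gradient] .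

lemma quadratic_upper_bound: "f y \<le> f x + g x \<bullet> (y - x) + L / 2 * (norm (y - x))\<^sup>2"
  using lipschitz_gradient_imp_quadratic_upper_bound[OF gradient lipschitz_gradient] .

lemma gradient_step_decrease: "f (x - (1 / L) *\<^sub>R g x) \<le> f x - (norm (g x))\<^sup>2 / (2 * L)"
proof -
  have "f (x - (1 / L) *\<^sub>R g x)
      \<le> f x + g x \<bullet> (- ((1 / L) *\<^sub>R g x)) + L / 2 * (norm (- ((1 / L) *\<^sub>R g x)))\<^sup>2"
    using quadratic_upper_bound[of "x - (1 / L) *\<^sub>R g x" x] by simp
  also have "\<dots> = f x - (norm (g x))\<^sup>2 / (2 * L)"
    using L_pos by (simp add: power2_norm_eq_inner[symmetric] power2_eq_square field_simps)
  finally show ?thesis .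
qed

text \<open>Both the tangent-plane bound at \<open>v\<close> and the quadratic upper bound at \<open>u\<close> are
  evaluated at \<open>w = u - (1/L) (\<nabla>f(u) - \<nabla>f(v))\<close>.\<close>

lemma interpolation:
  "f u \<ge> f v + g v \<bullet> (u - v) + (norm (g u - g v))\<^sup>2 / (2 * L)"
proof -
  define \<delta> where "\<delta> = g u - g v"
  define w where "w = u - (1 / L) *\<^sub>R \<delta>"
  have lower: "f w \<ge> f v + g v \<bullet> (u - v) - (1 / L) * (g v \<bullet> \<delta>)"
    using above_tangent_plane[of v w] unfolding w_def by (simp add: inner_diff_right)
  have upper: "f w \<le> f u - (1 / L) * (g u \<bullet> \<delta>) + (norm \<delta>)\<^sup>2 / (2 * L)"
  proof -
    have "L / 2 * (norm (w - u))\<^sup>2 = (norm \<delta>)\<^sup>2 / (2 * L)"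
      unfolding w_def using L_pos by (simp add: power2_eq_square field_simps)
    then show ?thesis
      using quadratic_upper_bound[of w u] unfolding w_def by (simp add: inner_diff_right)
  qed
  have "(1 / L) * (g u \<bullet> \<delta>) - (1 / L) * (g v \<bullet> \<delta>) = 2 * ((norm \<delta>)\<^sup>2 / (2 * L))"
    unfolding \<delta>_def using L_pos by (simp add: inner_diff_left power2_norm_eq_inner field_simps)
  with lower upper show ?thesis
    unfolding \<delta>_def by linarith
qed

lemma potential_decrease:
  assumes "g xs = 0" and "\<theta>' \<ge> 1" and "\<theta>'\<^sup>2 - \<theta>' \<le> \<theta>\<^sup>2"
    and z: "z = \<theta>' *\<^sub>R x' - (\<theta>' - 1) *\<^sub>R (x - (1 / L) *\<^sub>R g x)"
  shows "2 * \<theta>'\<^sup>2 * (f x' - f xs - (norm (g x'))\<^sup>2 / (2 * L))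
        + L / 2 * (norm (z - (2 * \<theta>' / L) *\<^sub>R g x' - xs))\<^sup>2
      \<le> 2 * \<theta>\<^sup>2 * (f x - f xs - (norm (g x))\<^sup>2 / (2 * L)) + L / 2 * (norm (z - xs))\<^sup>2"
proof -
  define A B C N N' where "A = g x' \<bullet> (x' - xs)" and "B = g x' \<bullet> (x' - x)"
    and "C = g x' \<bullet> g x" and "N = (norm (g x))\<^sup>2" and "N' = (norm (g x'))\<^sup>2"
  have "f xs \<ge> f x' + g x' \<bullet> (xs - x') + (norm (g x'))\<^sup>2 / (2 * L)"
    using interpolation[where u=xs and v=x'] \<open>g xs = 0\<close> by simp
  then have a: "f xs - f x' + A - N' / (2 * L) \<ge> 0"
    unfolding A_def N'_def by (simp add: inner_diff_right)
  have "(norm (g x - g x'))\<^sup>2 = N - 2 * C + N'"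
    unfolding N_def N'_def C_def
    by (simp add: power2_norm_eq_inner inner_diff_left inner_diff_right inner_commute)
  then have b: "f x - f x' + B - (N - 2 * C + N') / (2 * L) \<ge> 0"
    using interpolation[where u=x and v=x'] unfolding B_def by (simp add: inner_diff_right)
  have c: "f x - f xs - N / (2 * L) \<ge> 0"
    using interpolation[where u=x and v=xs] \<open>g xs = 0\<close> unfolding N_def by simp
  have z_xs: "z - xs = (x' - xs) + (\<theta>' - 1) *\<^sub>R (x' - x) + ((\<theta>' - 1) / L) *\<^sub>R g x"
    unfolding z by (simp add: algebra_simps)
  have inner_z: "g x' \<bullet> (z - xs) = A + (\<theta>' - 1) * B + ((\<theta>' - 1) / L) * C"
    unfolding z_xs A_def B_def C_def by (simp add: inner_add_right)
  have shift: "z - (2 * \<theta>' / L) *\<^sub>R g x' - xs = (z - xs) - (2 * \<theta>' / L) *\<^sub>R g x'"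
    by simp
  have norm_z: "(norm (z - (2 * \<theta>' / L) *\<^sub>R g x' - xs))\<^sup>2 = (norm (z - xs))\<^sup>2
      - 2 * (2 * \<theta>' / L) * (A + (\<theta>' - 1) * B + ((\<theta>' - 1) / L) * C) + (2 * \<theta>' / L)\<^sup>2 * N'"
    unfolding shift norm_diff_scaleR_squared inner_commute[of "z - xs"] inner_z N'_def by simp
  \<comment> \<open>the decrease is exactly \<open>2\<theta>'\<close>, \<open>2\<theta>'(\<theta>' - 1)\<close> and \<open>2(\<theta>\<^sup>2 - \<theta>'\<^sup>2 + \<theta>')\<close> times the
    slacks \<open>a\<close>, \<open>b\<close>, \<open>c\<close>\<close>
  have "(2 * \<theta>\<^sup>2 * (f x - f xs - N / (2 * L)) + L / 2 * (norm (z - xs))\<^sup>2)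
      - (2 * \<theta>'\<^sup>2 * (f x' - f xs - N' / (2 * L)) + L / 2 * (norm (z - (2 * \<theta>' / L) *\<^sub>R g x' - xs))\<^sup>2)
      = 2 * \<theta>' * (f xs - f x' + A - N' / (2 * L))
        + 2 * \<theta>' * (\<theta>' - 1) * (f x - f x' + B - (N - 2 * C + N') / (2 * L))
        + 2 * (\<theta>\<^sup>2 - \<theta>'\<^sup>2 + \<theta>') * (f x - f xs - N / (2 * L))"
    unfolding norm_z using L_pos by (simp add: field_simps power2_eq_square)
  moreover have "2 * \<theta>' * (f xs - f x' + A - N' / (2 * L)) \<ge> 0"
    using a \<open>\<theta>' \<ge> 1\<close> by simp
  moreover have "2 * \<theta>' * (\<theta>' - 1) * (f x - f x' + B - (N - 2 * C + N') / (2 * L)) \<ge> 0"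
    using b \<open>\<theta>' \<ge> 1\<close> by simp
  moreover have "2 * (\<theta>\<^sup>2 - \<theta>'\<^sup>2 + \<theta>') * (f x - f xs - N / (2 * L)) \<ge> 0"
    using c \<open>\<theta>'\<^sup>2 - \<theta>' \<le> \<theta>\<^sup>2\<close> by simp
  ultimately show ?thesis
    unfolding N_def N'_def by linarith
qed

end

lemma ogm_x_0 [simp]: "ogm_x g L x0 0 = x0"
  and ogm_y_0 [simp]: "ogm_y g L x0 0 = x0"
  by (simp_all add: ogm_x_def ogm_y_def)

lemma ogm_y_Suc: "ogm_y g L x0 (Suc k) = ogm_x g L x0 k - (1 / L) *\<^sub>R g (ogm_x g L x0 k)"
  by (simp add: ogm_x_def ogm_y_def Let_def split: prod.split)

lemma ogm_x_Suc:
  "ogm_x g L x0 (Suc k) = ogm_y g L x0 (Suc k)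
    + (real k / (real k + 3)) *\<^sub>R (ogm_y g L x0 (Suc k) - ogm_y g L x0 k)
    + ((real k + 2) / (real k + 3)) *\<^sub>R (ogm_y g L x0 (Suc k) - ogm_x g L x0 k)"
  by (simp add: ogm_x_def ogm_y_def Let_def split: prod.split)

definition ogm_theta :: "nat \<Rightarrow> real" where
  "ogm_theta k = (real k + 2) / 2"

lemma ogm_theta_Suc_ge_1: "ogm_theta (Suc k) \<ge> 1"
  by (simp add: ogm_theta_def)

lemma ogm_theta_Suc_squared_le: "(ogm_theta (Suc k))\<^sup>2 - ogm_theta (Suc k) \<le> (ogm_theta k)\<^sup>2"
  by (simp add: ogm_theta_def power2_eq_square field_simps)

definition ogm_z :: "('a::real_inner \<Rightarrow> 'a) \<Rightarrow> real \<Rightarrow> 'a \<Rightarrow> nat \<Rightarrow> 'a" where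
  "ogm_z g L x0 k = ogm_theta k *\<^sub>R ogm_x g L x0 k - (ogm_theta k - 1) *\<^sub>R ogm_y g L x0 k"

lemma ogm_z_0: "ogm_z g L x0 0 = x0"
  by (simp add: ogm_z_def ogm_theta_def)

lemma ogm_z_Suc:
  "ogm_z g L x0 (Suc k) = ogm_z g L x0 k - (2 * ogm_theta k / L) *\<^sub>R g (ogm_x g L x0 k)"
proof -
  define x y y' where "x = ogm_x g L x0 k" and "y = ogm_y g L x0 k" and "y' = ogm_y g L x0 (Suc k)"
  define \<theta> \<theta>' where "\<theta> = ogm_theta k" and "\<theta>' = ogm_theta (Suc k)"
  have "real k + 3 \<noteq> 0"
    by linarith
  then have "\<theta>' * (real k / (real k + 3)) = \<theta> - 1" and "\<theta>' * ((real k + 2) / (real k + 3)) = \<theta>"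
    unfolding \<theta>_def \<theta>'_def ogm_theta_def by (simp_all add: field_simps)
  then have "\<theta>' *\<^sub>R ogm_x g L x0 (Suc k) = \<theta>' *\<^sub>R y' + (\<theta> - 1) *\<^sub>R (y' - y) + \<theta> *\<^sub>R (y' - x)"
    unfolding ogm_x_Suc x_def y_def y'_def by (simp add: scaleR_add_right)
  then have "ogm_z g L x0 (Suc k) = y' + (\<theta> - 1) *\<^sub>R (y' - y) + \<theta> *\<^sub>R (y' - x)"
    unfolding ogm_z_def \<theta>'_def[symmetric] y'_def[symmetric] by (simp add: algebra_simps)
  also have "\<dots> = \<theta> *\<^sub>R x - (\<theta> - 1) *\<^sub>R y - (1 / L + \<theta> / L + (\<theta> - 1) / L) *\<^sub>R g x"
    unfolding y'_def ogm_y_Suc x_def[symmetric] by (simp add: algebra_simps)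
  also have "1 / L + \<theta> / L + (\<theta> - 1) / L = 2 * \<theta> / L"
    by (simp add: add_divide_distrib[symmetric])
  finally show ?thesis
    unfolding ogm_z_def x_def y_def \<theta>_def .
qed

context smooth_convex
begin

definition ogm_potential :: "'a \<Rightarrow> 'a \<Rightarrow> nat \<Rightarrow> real" where
  "ogm_potential xs x0 k =
     2 * (ogm_theta k)\<^sup>2 * (f (ogm_x g L x0 k) - f xs - (norm (g (ogm_x g L x0 k)))\<^sup>2 / (2 * L))
     + L / 2 * (norm (ogm_z g L x0 (Suc k) - xs))\<^sup>2"

lemma ogm_potential_0_le:
  assumes "g xs = 0"
  shows "ogm_potential xs x0 0 \<le> L / 2 * (norm (x0 - xs))\<^sup>2"
  using potential_decrease[OF assms, of 1 0 x0 x0 x0]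
  by (simp add: ogm_potential_def ogm_z_Suc ogm_z_0 ogm_theta_def)

lemma ogm_potential_Suc_le:
  assumes "g xs = 0"
  shows "ogm_potential xs x0 (Suc k) \<le> ogm_potential xs x0 k"
proof -
  have "ogm_z g L x0 (Suc k) = ogm_theta (Suc k) *\<^sub>R ogm_x g L x0 (Suc k)
      - (ogm_theta (Suc k) - 1) *\<^sub>R (ogm_x g L x0 k - (1 / L) *\<^sub>R g (ogm_x g L x0 k))"
    unfolding ogm_z_def ogm_y_Suc ..
  from potential_decrease[OF assms ogm_theta_Suc_ge_1 ogm_theta_Suc_squared_le this]
  show ?thesis
    unfolding ogm_potential_def ogm_z_Suc[of g L x0 "Suc k"] .
qed

lemma ogm_potential_le:
  assumes "g xs = 0"
  shows "ogm_potential xs x0 k \<le> L / 2 * (norm (x0 - xs))\<^sup>2"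
proof (induction k)
  case 0
  show ?case
    using ogm_potential_0_le[OF assms] .
next
  case (Suc k)
  then show ?case
    using ogm_potential_Suc_le[OF assms, of x0 k] by linarith
qed

theorem ogm_y_convergence_rate:
  assumes minimizer: "\<And>x. f xs \<le> f x"
  shows "f (ogm_y g L x0 (Suc k)) - f xs \<le> L * (norm (x0 - xs))\<^sup>2 / (real k + 2)\<^sup>2"
proof -
  have "g xs = 0"
    using gradient minimizer by (rule gradient_eq_0_if_minimum)
  have "2 * (ogm_theta k)\<^sup>2 * (f (ogm_y g L x0 (Suc k)) - f xs)
      \<le> 2 * (ogm_theta k)\<^sup>2 * (f (ogm_x g L x0 k) - f xs - (norm (g (ogm_x g L x0 k)))\<^sup>2 / (2 * L))"
    using gradient_step_decrease[of "ogm_x g L x0 k"]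
    by (intro mult_left_mono) (simp_all add: ogm_y_Suc)
  also have "\<dots> \<le> ogm_potential xs x0 k"
    unfolding ogm_potential_def using L_pos by simp
  also have "\<dots> \<le> L / 2 * (norm (x0 - xs))\<^sup>2"
    using ogm_potential_le[OF \<open>g xs = 0\<close>] .
  finally have "(real k + 2)\<^sup>2 * (f (ogm_y g L x0 (Suc k)) - f xs) \<le> L * (norm (x0 - xs))\<^sup>2"
    by (simp add: ogm_theta_def power_divide)
  then show ?thesis
    by (simp add: pos_le_divide_eq mult.commute)
qed

end

theorem corollary2:
  fixes f :: "real ^ 'n \<Rightarrow> real" and g :: "real ^ 'n \<Rightarrow> real ^ 'n"
    and L :: real and xs x0 :: "real ^ 'n" and k :: nat
  assumes "convex_on UNIV f"
    and "\<And>x. (f has_derivative (\<lambda>h. g x \<bullet> h)) (at x)"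
    and "L > 0"
    and "\<And>x y. norm (g x - g y) \<le> L * norm (x - y)"
    and "\<And>x. f xs \<le> f x"
    and "k \<ge> 1"
  shows "f (ogm_y g L x0 k) - f xs \<le> L * (norm (x0 - xs))\<^sup>2 / (real k + 1)\<^sup>2"
proof -
  interpret smooth_convex f g L
    using assms(1-4) by unfold_locales
  obtain j where "k = Suc j"
    using \<open>k \<ge> 1\<close> by (cases k) auto
  then show ?thesis
    using ogm_y_convergence_rate[OF assms(5), of x0 j] by (simp add: add.commute)
qed

end
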